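(* Let $n,k,l\ge1$ and let $\mathbf P:\mathbb R^{n\times k}\to\mathbb R^{n\times l}$ be a permutation equivariant polynomial map. Then $$\mathbf P(\mathbf X)=\sum_{\alpha\in\mathbb N^k,\ |\alpha|\le n}\mathbf b_\alpha\,\mathbf q_\alpha^T,$$ where $\mathbf b_\alpha=(\mathbf x_1^\alpha,\dots,\mathbf x_n^\alpha)^T\in\mathbb R^n$ and $\mathbf q_\alpha=(q_{\alpha,1},\dots,q_{\alpha,l})^T$ with each $q_{\alpha,j}=q_{\alpha,j}(s_1(\mathbf X),\dots,s_t(\mathbf X))$ a polynomial in the $t=\binom{n+k}{k}$ power-sum multi-symmetric polynomials $s_1,\dots,s_t$. Conversely, every polynomial map $\mathbf P$ of this form is permutation equivariant.
   Context: $\mathbf X=(\mathbf x_1,\dots,\mathbf x_n)^T\in\mathbb R^{n\times k}$ with rows $\mathbf x_i\in\mathbb R^k$; $S_n$ acts by $\sigma\cdot\mathbf X=(\mathbf x_{\sigma^{-1}(1)},\dots,\mathbf x_{\sigma^{-1}(n)})^T$, and $\mathbf P$ is permutation equivariant if $\mathbf P(\sigma\cdot\mathbf X)=\sigma\cdot\mathbf P(\mathbf X)$ for all $\sigma\in S_n$. For $\mathbf x\in\mathbb R^k$ and a multi-index $\alpha=(\alpha_1,\dots,\alpha_k)\in\mathbb N^k$, $\mathbf x^\alpha=x_1^{\alpha_1}\cdots x_k^{\alpha_k}$ and $|\alpha|=\sum_i\alpha_i$. Let $\alpha_1,\dots,\alpha_t$ enumerate all multi-indices $\alpha\in\mathbb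 N^k$ with $|\alpha|\le n$ (there are $t=\binom{n+k}{k}$ of them); the power-sum multi-symmetric polynomials are $s_j(\mathbf X)=\sum_{i=1}^n\mathbf x_i^{\alpha_j}$, $j\in[t]$. *)

theory Defs
  imports "HOL-Analysis.Analysis"
begin

definition poly_fun :: "'v set \<Rightarrow> (('v \<Rightarrow> real) \<Rightarrow> real) \<Rightarrow> bool" where
  "poly_fun V f \<longleftrightarrow> finite V \<and> (\<exists>M c. finite M \<and> (\<forall>m\<in>M. \<forall>v. v \<notin> V \<longrightarrow> m v = 0) \<and>
      (\<forall>y. f y = (\<Sum>m\<in>M. c m * (\<Prod>v\<in>V. y v ^ m v))))"

definition poly_map :: "(real^'k^'n \<Rightarrow> real^'l^'n) \<Rightarrow> bool" where
  "poly_map P \<longleftrightarrow> (\<forall>i c. poly_fun (UNIV :: ('n \<times> 'k) set)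
      (\<lambda>y. P (\<chi> i' r. y (i', r)) $ i $ c))"

definition perm_rows :: "('n \<Rightarrow> 'n) \<Rightarrow> 'a^'n \<Rightarrow> 'a^'n" where
  "perm_rows \<sigma> X = (\<chi> i. X $ (inv \<sigma> i))"

definition perm_equivariant :: "(real^'k^'n \<Rightarrow> real^'l^'n) \<Rightarrow> bool" where
  "perm_equivariant P \<longleftrightarrow>
     (\<forall>\<sigma> X. \<sigma> permutes (UNIV :: 'n set) \<longrightarrow> P (perm_rows \<sigma> X) = perm_rows \<sigma> (P X))"

definition mono_pow :: "real^'k \<Rightarrow> ('k \<Rightarrow> nat) \<Rightarrow> real" where
  "mono_pow x \<alpha> = (\<Prod>r\<in>UNIV. (x $ r) ^ \<alpha> r)"

definition multi_indices :: "nat \<Rightarrow> ('k::finite \<Rightarrow> nat) set" where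
  "multi_indices n = {\<alpha>. (\<Sum>r\<in>UNIV. \<alpha> r) \<le> n}"

definition power_sum :: "('k \<Rightarrow> nat) \<Rightarrow> real^'k^'n \<Rightarrow> real" where
  "power_sum \<alpha> X = (\<Sum>i\<in>UNIV. mono_pow (X $ i) \<alpha>)"

definition power_sum_form :: "(real^'k^'n \<Rightarrow> real^'l^'n) \<Rightarrow> bool" where
  "power_sum_form P \<longleftrightarrow> (\<exists>q :: ('k \<Rightarrow> nat) \<Rightarrow> 'l \<Rightarrow> ((('k \<Rightarrow> nat) \<Rightarrow> real) \<Rightarrow> real).
     (\<forall>\<alpha> j. poly_fun (multi_indices CARD('n)) (q \<alpha> j)) \<and>
     (\<forall>X. P X = (\<chi> i j. \<Sum>\<alpha>\<in>multi_indices CARD('n).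
                     mono_pow (X $ i) \<alpha> * q \<alpha> j (\<lambda>\<beta>. power_sum \<beta> X))))"

end

theory Submission
  imports Defs "HOL-Library.Function_Algebras"
begin

(* Fix a row i and let M_i(d) (row_module i d) consist of the functions
   sum_{|alpha| < d} x_i^alpha q_alpha(X) whose coefficients q_alpha are polynomials in the power
   sums s_beta, |beta| <= n.

   For exponents a_j (j in J) let T_J(a) (aug_monomial) be the sum of prod_j x_{phi j}^{a_j} over the
   injections phi of J into the n - 1 rows other than i. Adding one index gives a recursion in which
   sum_{l ~= i} x_l^e = s_e - x_i^e appears, so modulo lower powers of x_i every other row acts like -x_i,
   and T_J(a) = (-1)^|J| |J|! x_i^(sum a) mod M_i(|sum a|). For |J| = n there are no injections at all,
   so every x_i^delta with |delta| = n lies in M_i(n); by induction on the degree every monomial of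
   row i lies in M_i(n + 1), which is therefore closed under products. Summing the expansion of x_i^gamma
   over all rows writes every power sum through those of degree <= n, and then the recursion puts every
   T_J(a) into M_i(n + 1).

   A polynomial invariant under the permutations fixing row i equals its average over them, which is
   sum_m c_m x_i^(m_i) T(m); so it lies in M_i(n + 1). For an equivariant P this applies to the entries
   of row i, and equivariance carries the expansion to every other row with the same coefficients.
   The converse direction is the permutation invariance of the power sums. *)


section \<open>Polynomial functions\<close>

lemma poly_funI:
  fixes m :: "'i \<Rightarrow> 'v \<Rightarrow> nat"
  assumes "finite V" "finite I" "\<And>i v. i \<in> I \<Longrightarrow> v \<notin> V \<Longrightarrow> m i v = 0"
    and "\<And>y. f y = (\<Sum>i\<in>I. c i * (\<Prod>v\<in>V. y v ^ m i v))"
  shows "poly_fun V f"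
proof -
  define c' where "c' \<mu> = (\<Sum>i\<in>{i\<in>I. m i = \<mu>}. c i)" for \<mu>
  have "f y = (\<Sum>\<mu>\<in>m ` I. c' \<mu> * (\<Prod>v\<in>V. y v ^ \<mu> v))" for y
  proof -
    have "f y = (\<Sum>\<mu>\<in>m ` I. \<Sum>i\<in>{i\<in>I. m i = \<mu>}. c i * (\<Prod>v\<in>V. y v ^ m i v))"
      unfolding assms(4) using assms(2) by (rule sum.image_gen)
    also have "\<dots> = (\<Sum>\<mu>\<in>m ` I. c' \<mu> * (\<Prod>v\<in>V. y v ^ \<mu> v))"
      unfolding c'_def sum_distrib_right by (intro sum.cong refl) auto
    finally show ?thesis .
  qed
  then show ?thesis
    unfolding poly_fun_def using assms by (intro conjI exI[of _ "m ` I"] exI[of _ c']) auto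
qed

lemma poly_funE:
  assumes "poly_fun V f"
  obtains M c where "finite V" "finite M" "\<And>m v. m \<in> M \<Longrightarrow> v \<notin> V \<Longrightarrow> m v = 0"
    and "\<And>y. f y = (\<Sum>m\<in>M. c m * (\<Prod>v\<in>V. y v ^ m v))"
  using assms unfolding poly_fun_def by blast

lemma poly_fun_const: "finite V \<Longrightarrow> poly_fun V (\<lambda>y. a)"
  by (rule poly_funI[where I="{()}" and m="\<lambda>_ _. 0" and c="\<lambda>_. a"]) auto

lemma poly_fun_var:
  assumes "finite V" "w \<in> V"
  shows "poly_fun V (\<lambda>y. y w)"
proof (rule poly_funI[where I="{()}" and m="\<lambda>_ v. if v = w then 1 else 0" and c="\<lambda>_. 1"])
  fix y :: "'a \<Rightarrow> real"
  have "(\<Prod>v\<in>V. y v ^ (if v = w then 1 else 0)) = (\<Prod>v\<in>V. if v = w then y w else 1)"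
    by (intro prod.cong) auto
  also have "\<dots> = y w"
    using assms by (simp add: prod.delta)
  finally show "y w = (\<Sum>i\<in>{()}. 1 * (\<Prod>v\<in>V. y v ^ (if v = w then 1 else 0)))"
    by simp
qed (use assms in auto)

lemma poly_fun_add:
  assumes "poly_fun V f" "poly_fun V g"
  shows "poly_fun V (\<lambda>y. f y + g y)"
proof -
  obtain M1 c1 where 1: "finite V" "finite M1" "\<And>m v. m \<in> M1 \<Longrightarrow> v \<notin> V \<Longrightarrow> m v = 0"
    "\<And>y. f y = (\<Sum>m\<in>M1. c1 m * (\<Prod>v\<in>V. y v ^ m v))"
    using assms(1) by (elim poly_funE) blast
  obtain M2 c2 where 2: "finite V" "finite M2" "\<And>m v. m \<in> M2 \<Longrightarrow> v \<notin> V \<Longrightarrow> m v = 0"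
    "\<And>y. g y = (\<Sum>m\<in>M2. c2 m * (\<Prod>v\<in>V. y v ^ m v))"
    using assms(2) by (elim poly_funE) blast
  show ?thesis
    by (rule poly_funI[where I="M1 <+> M2" and m="case_sum id id" and c="case_sum c1 c2"])
      (use 1 2 in \<open>auto simp: sum.Plus\<close>)
qed

lemma poly_fun_mult:
  assumes "poly_fun V f" "poly_fun V g"
  shows "poly_fun V (\<lambda>y. f y * g y)"
proof -
  obtain M1 c1 where 1: "finite V" "finite M1" "\<And>m v. m \<in> M1 \<Longrightarrow> v \<notin> V \<Longrightarrow> m v = 0"
    "\<And>y. f y = (\<Sum>m\<in>M1. c1 m * (\<Prod>v\<in>V. y v ^ m v))"
    using assms(1) by (elim poly_funE) blast
  obtain M2 c2 where 2: "finite V" "finite M2" "\<And>m v. m \<in> M2 \<Longrightarrow> v \<notin> V \<Longrightarrow> m v = 0"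
    "\<And>y. g y = (\<Sum>m\<in>M2. c2 m * (\<Prod>v\<in>V. y v ^ m v))"
    using assms(2) by (elim poly_funE) blast
  show ?thesis
  proof (rule poly_funI[where I="M1 \<times> M2" and m="\<lambda>(a, b) v. a v + b v" and c="\<lambda>(a, b). c1 a * c2 b"])
    fix y :: "'a \<Rightarrow> real"
    have "f y * g y = (\<Sum>a\<in>M1. \<Sum>b\<in>M2. (c1 a * (\<Prod>v\<in>V. y v ^ a v)) * (c2 b * (\<Prod>v\<in>V. y v ^ b v)))"
      unfolding 1(4) 2(4) by (rule sum_product)
    also have "\<dots> = (\<Sum>(a, b)\<in>M1 \<times> M2. c1 a * c2 b * (\<Prod>v\<in>V. y v ^ (a v + b v)))"
      unfolding sum.cartesian_product by (intro sum.cong refl) (auto simp: power_add prod.distrib)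
    finally show "f y * g y = (\<Sum>i\<in>M1 \<times> M2. (case i of (a, b) \<Rightarrow> c1 a * c2 b) *
        (\<Prod>v\<in>V. y v ^ (case i of (a, b) \<Rightarrow> \<lambda>v. a v + b v) v))"
      by (simp add: case_prod_beta)
  qed (use 1 2 in auto)
qed

lemma poly_fun_matrix_expansion:
  fixes f :: "real^'k::finite^'n::finite \<Rightarrow> real"
  assumes "poly_fun UNIV (\<lambda>y. f (\<chi> i r. y (i, r)))"
  obtains M c where "finite M"
    and "\<And>X. f X = (\<Sum>m\<in>M. c m * (\<Prod>i\<in>UNIV. mono_pow (X $ i) (curry m i)))"
proof -
  obtain M c where M: "finite M" "\<And>y. f (\<chi> i r. y (i, r)) = (\<Sum>m\<in>M. c m * (\<Prod>v\<in>UNIV. y v ^ m v))"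
    using assms by (elim poly_funE) blast
  have "(\<Prod>v\<in>UNIV. ((\<lambda>(i, r). X $ i $ r) v) ^ m v) = (\<Prod>i\<in>UNIV. mono_pow (X $ i) (curry m i))"
    for X :: "real^'k^'n" and m
    using prod.cartesian_product[of "\<lambda>i r. (X $ i $ r) ^ m (i, r)" UNIV UNIV]
    by (simp add: mono_pow_def case_prod_beta UNIV_Times_UNIV)
  then have "f X = (\<Sum>m\<in>M. c m * (\<Prod>i\<in>UNIV. mono_pow (X $ i) (curry m i)))" for X
    using M(2)[of "\<lambda>(i, r). X $ i $ r"] by simp
  with M(1) show thesis by (rule that)
qed


section \<open>Multi-indices\<close>

definition mdeg :: "('k::finite \<Rightarrow> nat) \<Rightarrow> nat" where
  "mdeg \<alpha> = (\<Sum>r\<in>UNIV. \<alpha> r)"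

definition unit_index :: "'k \<Rightarrow> 'k \<Rightarrow> nat" where
  "unit_index c = (\<lambda>r. if r = c then 1 else 0)"

lemma mdeg_add: "mdeg (\<alpha> + \<beta>) = mdeg \<alpha> + mdeg \<beta>"
  by (simp add: mdeg_def sum.distrib)

lemma mdeg_zero [simp]: "mdeg 0 = 0"
  by (simp add: mdeg_def)

lemma mdeg_eq_0_iff: "mdeg \<alpha> = 0 \<longleftrightarrow> \<alpha> = 0"
  by (auto simp: mdeg_def fun_eq_iff)

lemma mdeg_unit_index [simp]: "mdeg (unit_index c) = 1"
  by (simp add: mdeg_def unit_index_def)

lemma finite_mdeg_less: "finite {\<alpha> :: 'k::finite \<Rightarrow> nat. mdeg \<alpha> < d}"
proof (rule finite_subset)
  show "{\<alpha> :: 'k \<Rightarrow> nat. mdeg \<alpha> < d} \<subseteq> UNIV \<rightarrow>\<^sub>E {..<d}"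
  proof
    fix \<alpha> :: "'k \<Rightarrow> nat"
    assume "\<alpha> \<in> {\<alpha>. mdeg \<alpha> < d}"
    then have "\<alpha> r < d" for r
      using member_le_sum[of r UNIV \<alpha>] by (simp add: mdeg_def)
    then show "\<alpha> \<in> UNIV \<rightarrow>\<^sub>E {..<d}"
      by (simp add: PiE_UNIV_domain)
  qed
qed (auto intro: finite_PiE)

lemma multi_indices_eq: "multi_indices n = {\<alpha>. mdeg \<alpha> < Suc n}"
  by (auto simp: multi_indices_def mdeg_def)

lemma finite_multi_indices: "finite (multi_indices n)"
  by (simp add: multi_indices_eq finite_mdeg_less)

lemma mdeg_split_unit:
  assumes "mdeg \<delta> > 0"
  obtains c \<delta>' where "\<delta> = \<delta>' + unit_index c" "mdeg \<delta>' = mdeg \<delta> - 1"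
proof -
  obtain c where c: "\<delta> c > 0"
    using assms by (metis mdeg_def neq0_conv sum.neutral)
  define \<delta>' where "\<delta>' = \<delta>(c := \<delta> c - 1)"
  have "\<delta> = \<delta>' + unit_index c"
    using c by (auto simp: fun_eq_iff \<delta>'_def unit_index_def)
  moreover from this have "mdeg \<delta>' = mdeg \<delta> - 1"
    by (simp add: mdeg_add)
  ultimately show thesis by (rule that)
qed

lemma multi_index_unit_decomposition:
  assumes "finite J" "mdeg \<delta> = card J"
  shows "\<exists>a. (\<forall>j\<in>J. mdeg (a j) = 1) \<and> sum a J = \<delta>"
  using assms
proof (induction J arbitrary: \<delta> rule: finite_induct)
  case empty
  then show ?case by (simp add: mdeg_eq_0_iff)
next
  case (insert z J)
  then obtain c \<delta>' where \<delta>: "\<delta> = \<delta>' + unit_index c" "mdeg \<delta>' = card J"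
    by (metis mdeg_split_unit card_insert_disjoint diff_Suc_1 zero_less_Suc)
  then obtain a where a: "\<forall>j\<in>J. mdeg (a j) = 1" "sum a J = \<delta>'"
    using insert.IH by blast
  have "sum (a(z := unit_index c)) J = sum a J"
    using insert.hyps by (intro sum.cong) auto
  then have "sum (a(z := unit_index c)) (insert z J) = \<delta>"
    using insert.hyps a(2) \<delta>(1) by (simp only: sum.insert) (simp add: add.commute)
  with a(1) insert.hyps show ?case
    by (intro exI[of _ "a(z := unit_index c)"]) auto
qed

lemma mono_pow_add: "mono_pow x (\<alpha> + \<beta>) = mono_pow x \<alpha> * mono_pow x \<beta>"
  by (simp add: mono_pow_def power_add prod.distrib)

lemma mono_pow_zero [simp]: "mono_pow x 0 = 1"
  by (simp add: mono_pow_def)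

lemma perm_rows_nth: "perm_rows \<sigma> X $ i = X $ inv \<sigma> i"
  by (simp add: perm_rows_def)

lemma power_sum_perm_rows:
  assumes "\<sigma> permutes UNIV"
  shows "power_sum \<beta> (perm_rows \<sigma> X) = power_sum \<beta> X"
  using sum.permute[OF permutes_inv[OF assms], of "\<lambda>i. mono_pow (X $ i) \<beta>"]
  by (simp add: power_sum_def perm_rows_nth o_def)


section \<open>Polynomials in the power sums\<close>

definition power_sum_polys :: "(real^'k::finite^'n::finite \<Rightarrow> real) set" where
  "power_sum_polys = {h. \<exists>Q. poly_fun (multi_indices CARD('n)) Q \<and> (\<forall>X. h X = Q (\<lambda>\<beta>. power_sum \<beta> X))}"

lemma power_sum_polys_const: "(\<lambda>X. a) \<in> power_sum_polys"
  unfolding power_sum_polys_def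
  by (auto intro!: exI[of _ "\<lambda>_. a"] poly_fun_const finite_multi_indices)

lemma power_sum_polys_power_sum:
  assumes "mdeg \<beta> \<le> CARD('n)"
  shows "(power_sum \<beta> :: real^'k::finite^'n::finite \<Rightarrow> real) \<in> power_sum_polys"
proof -
  have "\<beta> \<in> multi_indices CARD('n)"
    using assms by (simp add: multi_indices_def mdeg_def)
  then show ?thesis
    unfolding power_sum_polys_def by (auto intro!: exI[of _ "\<lambda>y. y \<beta>"] poly_fun_var finite_multi_indices)
qed

lemma power_sum_polys_add: "f \<in> power_sum_polys \<Longrightarrow> g \<in> power_sum_polys \<Longrightarrow> (\<lambda>X. f X + g X) \<in> power_sum_polys"
  unfolding power_sum_polys_def by (auto intro!: poly_fun_add)

lemma power_sum_polys_mult: "f \<in> power_sum_polys \<Longrightarrow> g \<in> power_sum_polys \<Longrightarrow> (\<lambda>X. f X * g X) \<in> power_sum_polys"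
  unfolding power_sum_polys_def by (auto intro!: poly_fun_mult)

lemma power_sum_polys_sum:
  "finite S \<Longrightarrow> (\<And>s. s \<in> S \<Longrightarrow> f s \<in> power_sum_polys) \<Longrightarrow> (\<lambda>X. \<Sum>s\<in>S. f s X) \<in> power_sum_polys"
  by (induction S rule: finite_induct) (auto intro!: power_sum_polys_const power_sum_polys_add)

lemma power_sum_polys_perm_rows:
  assumes "h \<in> power_sum_polys" "\<sigma> permutes UNIV"
  shows "h (perm_rows \<sigma> X) = h X"
  using assms unfolding power_sum_polys_def by (auto simp: power_sum_perm_rows)


definition row_module :: "'n::finite \<Rightarrow> nat \<Rightarrow> (real^'k::finite^'n \<Rightarrow> real) set" where
  "row_module i d = {h. \<exists>q. (\<forall>\<alpha>. q \<alpha> \<in> power_sum_polys) \<and>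
     (\<forall>X. h X = (\<Sum>\<alpha>\<in>{\<alpha>. mdeg \<alpha> < d}. mono_pow (X $ i) \<alpha> * q \<alpha> X))}"

lemma row_moduleI:
  "(\<And>\<alpha>. q \<alpha> \<in> power_sum_polys) \<Longrightarrow> (\<And>X. h X = (\<Sum>\<alpha>\<in>{\<alpha>. mdeg \<alpha> < d}. mono_pow (X $ i) \<alpha> * q \<alpha> X))
    \<Longrightarrow> h \<in> row_module i d"
  unfolding row_module_def by blast

lemma row_moduleE:
  assumes "h \<in> row_module i d"
  obtains q where "\<And>\<alpha>. q \<alpha> \<in> power_sum_polys"
    and "\<And>X. h X = (\<Sum>\<alpha>\<in>{\<alpha>. mdeg \<alpha> < d}. mono_pow (X $ i) \<alpha> * q \<alpha> X)"
  using assms unfolding row_module_def by blast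

lemma row_module_cong: "h \<in> row_module i d \<Longrightarrow> (\<And>X. h X = g X) \<Longrightarrow> g \<in> row_module i d"
  by (metis ext)

lemma row_module_zero: "(\<lambda>X. 0) \<in> row_module i d"
  by (rule row_moduleI[where q="\<lambda>_ _. 0"]) (auto intro: power_sum_polys_const)

lemma row_module_add:
  assumes "f \<in> row_module i d" "g \<in> row_module i d"
  shows "(\<lambda>X. f X + g X) \<in> row_module i d"
proof -
  obtain q1 where q1: "\<And>\<alpha>. q1 \<alpha> \<in> power_sum_polys"
    "\<And>X. f X = (\<Sum>\<alpha>\<in>{\<alpha>. mdeg \<alpha> < d}. mono_pow (X $ i) \<alpha> * q1 \<alpha> X)"
    using assms(1) by (elim row_moduleE) blast
  obtain q2 where q2: "\<And>\<alpha>. q2 \<alpha> \<in> power_sum_polys"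
    "\<And>X. g X = (\<Sum>\<alpha>\<in>{\<alpha>. mdeg \<alpha> < d}. mono_pow (X $ i) \<alpha> * q2 \<alpha> X)"
    using assms(2) by (elim row_moduleE) blast
  show ?thesis
    by (rule row_moduleI[where q="\<lambda>\<alpha> X. q1 \<alpha> X + q2 \<alpha> X"])
      (auto intro: power_sum_polys_add q1(1) q2(1) simp: q1(2) q2(2) sum.distrib distrib_left)
qed

lemma row_module_scale:
  assumes "p \<in> power_sum_polys" "h \<in> row_module i d"
  shows "(\<lambda>X. p X * h X) \<in> row_module i d"
proof -
  obtain q where q: "\<And>\<alpha>. q \<alpha> \<in> power_sum_polys"
    "\<And>X. h X = (\<Sum>\<alpha>\<in>{\<alpha>. mdeg \<alpha> < d}. mono_pow (X $ i) \<alpha> * q \<alpha> X)"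
    using assms(2) by (elim row_moduleE) blast
  show ?thesis
    by (rule row_moduleI[where q="\<lambda>\<alpha> X. p X * q \<alpha> X"])
      (auto intro: power_sum_polys_mult q(1) assms(1) simp: q(2) sum_distrib_left mult_ac)
qed

lemma row_module_cmult: "h \<in> row_module i d \<Longrightarrow> (\<lambda>X. c * h X) \<in> row_module i d"
  using row_module_scale[OF power_sum_polys_const] .

lemma row_module_diff:
  assumes "f \<in> row_module i d" "g \<in> row_module i d"
  shows "(\<lambda>X. f X - g X) \<in> row_module i d"
  using row_module_add[OF assms(1) row_module_cmult[OF assms(2), of "-1"]] by simp

lemma row_module_sum:
  "finite S \<Longrightarrow> (\<And>s. s \<in> S \<Longrightarrow> f s \<in> row_module i d) \<Longrightarrow> (\<lambda>X. \<Sum>s\<in>S. f s X) \<in> row_module i d"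
  by (induction S rule: finite_induct) (auto intro!: row_module_zero row_module_add)

lemma row_module_mono:
  assumes "h \<in> row_module i d" "d \<le> d'"
  shows "h \<in> row_module i d'"
proof -
  obtain q where q: "\<And>\<alpha>. q \<alpha> \<in> power_sum_polys"
    "\<And>X. h X = (\<Sum>\<alpha>\<in>{\<alpha>. mdeg \<alpha> < d}. mono_pow (X $ i) \<alpha> * q \<alpha> X)"
    using assms(1) by (elim row_moduleE) blast
  show ?thesis
  proof (rule row_moduleI[where q="\<lambda>\<alpha>. if mdeg \<alpha> < d then q \<alpha> else (\<lambda>_. 0)"])
    show "(if mdeg \<alpha> < d then q \<alpha> else (\<lambda>_. 0)) \<in> power_sum_polys" for \<alpha>
      by (auto intro: q(1) power_sum_polys_const)
    show "h X = (\<Sum>\<alpha>\<in>{\<alpha>. mdeg \<alpha> < d'}. mono_pow (X $ i) \<alpha> * (if mdeg \<alpha> < d then q \<alpha> else (\<lambda>_. 0)) X)" for X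
      unfolding q(2) using assms(2) by (intro sum.mono_neutral_cong_left finite_mdeg_less) auto
  qed
qed

lemma row_module_monomial:
  assumes "mdeg \<alpha> < d"
  shows "(\<lambda>X. mono_pow (X $ i) \<alpha>) \<in> row_module i d"
proof (rule row_moduleI[where q="\<lambda>\<beta> X. if \<beta> = \<alpha> then 1 else 0"])
  show "(\<lambda>X. if \<beta> = \<alpha> then 1 else 0) \<in> power_sum_polys" for \<beta>
    by (auto intro: power_sum_polys_const)
  show "mono_pow (X $ i) \<alpha> = (\<Sum>\<beta>\<in>{\<alpha>. mdeg \<alpha> < d}. mono_pow (X $ i) \<beta> * (if \<beta> = \<alpha> then 1 else 0))" for X
    using assms by (simp add: finite_mdeg_less if_distrib sum.delta cong: if_cong)
qed

lemma row_module_power_sum_polys: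
  assumes "p \<in> power_sum_polys" "d > 0"
  shows "p \<in> row_module i d"
  using row_module_scale[OF assms(1) row_module_monomial[of 0 d i]] assms(2) by simp

lemma row_module_shift:
  assumes "h \<in> row_module i d"
  shows "(\<lambda>X. mono_pow (X $ i) e * h X) \<in> row_module i (d + mdeg e)"
proof -
  obtain q where q: "\<And>\<alpha>. q \<alpha> \<in> power_sum_polys"
    "\<And>X. h X = (\<Sum>\<alpha>\<in>{\<alpha>. mdeg \<alpha> < d}. mono_pow (X $ i) \<alpha> * q \<alpha> X)"
    using assms by (elim row_moduleE) blast
  have "(\<lambda>X. \<Sum>\<alpha>\<in>{\<alpha>. mdeg \<alpha> < d}. q \<alpha> X * mono_pow (X $ i) (\<alpha> + e)) \<in> row_module i (d + mdeg e)"
    by (intro row_module_sum finite_mdeg_less row_module_scale q(1) row_module_monomial)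
      (simp add: mdeg_add)
  then show ?thesis
    by (rule row_module_cong) (simp add: q(2) sum_distrib_left mono_pow_add mult_ac)
qed


section \<open>Augmented monomials\<close>

definition injections :: "'a set \<Rightarrow> 'b set \<Rightarrow> ('a \<Rightarrow> 'b) set" where
  "injections J B = {\<phi> \<in> J \<rightarrow>\<^sub>E B. inj_on \<phi> J}"

lemma finite_injections: "finite J \<Longrightarrow> finite B \<Longrightarrow> finite (injections J B)"
  unfolding injections_def by (rule finite_subset[OF _ finite_PiE]) auto

lemma injections_empty_domain: "injections {} B = {\<lambda>_. undefined}"
  by (simp add: injections_def)

lemma injections_eq_empty:
  assumes "finite B" "card B < card J"
  shows "injections J B = {}"
  using assms card_inj_on_le[of _ J B] by (force simp: injections_def)

lemma sum_injections_insert: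
  assumes "finite J" "finite B" "z \<notin> J"
  shows "(\<Sum>\<psi>\<in>injections (insert z J) B. F \<psi>) = (\<Sum>\<phi>\<in>injections J B. \<Sum>l\<in>B - \<phi> ` J. F (\<phi>(z := l)))"
proof -
  have "(\<Sum>\<phi>\<in>injections J B. \<Sum>l\<in>B - \<phi> ` J. F (\<phi>(z := l)))
      = (\<Sum>p\<in>Sigma (injections J B) (\<lambda>\<phi>. B - \<phi> ` J). F ((fst p)(z := snd p)))"
    using assms by (subst sum.Sigma) (auto simp: finite_injections case_prod_beta)
  also have "\<dots> = (\<Sum>\<psi>\<in>injections (insert z J) B. F \<psi>)"
  proof (rule sum.reindex_bij_witness[where j="\<lambda>p. (fst p)(z := snd p)" and i="\<lambda>\<psi>. (\<psi>(z := undefined), \<psi> z)"])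
    fix p
    assume "p \<in> Sigma (injections J B) (\<lambda>\<phi>. B - \<phi> ` J)"
    then obtain \<phi> l where p: "p = (\<phi>, l)" "\<phi> \<in> J \<rightarrow>\<^sub>E B" "inj_on \<phi> J" "l \<in> B" "l \<notin> \<phi> ` J"
      by (auto simp: injections_def)
    have "\<phi> z = undefined"
      using p(2) assms(3) by (simp add: PiE_def extensional_def)
    then show "(((fst p)(z := snd p))(z := undefined), ((fst p)(z := snd p)) z) = p"
      by (auto simp: p(1) fun_eq_iff)
    show "(fst p)(z := snd p) \<in> injections (insert z J) B"
      using p assms(3) by (auto simp: injections_def PiE_iff extensional_def inj_on_fun_updI)
  next
    fix \<psi>
    assume "\<psi> \<in> injections (insert z J) B"
    then have \<psi>: "\<psi> \<in> insert z J \<rightarrow>\<^sub>E B" "inj_on \<psi> (insert z J)"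
      by (auto simp: injections_def)
    show "(fst (\<psi>(z := undefined), \<psi> z))(z := snd (\<psi>(z := undefined), \<psi> z)) = \<psi>"
      by simp
    have "\<psi> z \<notin> \<psi> ` J"
      using \<psi>(2) assms(3) by (auto simp: inj_on_def)
    then show "(\<psi>(z := undefined), \<psi> z) \<in> Sigma (injections J B) (\<lambda>\<phi>. B - \<phi> ` J)"
      using \<psi> assms(3) by (auto simp: injections_def PiE_iff extensional_def inj_on_def image_iff)
  qed simp
  finally show ?thesis ..
qed

definition aug_monomial :: "'n set \<Rightarrow> real^'k::finite^'n \<Rightarrow> 'j set \<Rightarrow> ('j \<Rightarrow> 'k \<Rightarrow> nat) \<Rightarrow> real" where
  "aug_monomial B X J a = (\<Sum>\<phi>\<in>injections J B. \<Prod>j\<in>J. mono_pow (X $ \<phi> j) (a j))"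

lemma aug_monomial_empty [simp]: "aug_monomial B X {} a = 1"
  by (simp add: aug_monomial_def injections_empty_domain)

lemma aug_monomial_eq_0: "finite B \<Longrightarrow> card B < card J \<Longrightarrow> aug_monomial B X J a = 0"
  by (simp add: aug_monomial_def injections_eq_empty)

lemma prod_mono_pow_update:
  assumes "finite J" "j \<in> J"
  shows "(\<Prod>j'\<in>J. mono_pow (x j') ((a(j := a j + e)) j')) = mono_pow (x j) e * (\<Prod>j'\<in>J. mono_pow (x j') (a j'))"
proof -
  have "(\<Prod>j'\<in>J. mono_pow (x j') ((a(j := a j + e)) j')) = (\<Prod>j'\<in>J. mono_pow (x j') (a j' + (if j' = j then e else 0)))"
    by (intro prod.cong) auto
  also have "\<dots> = (\<Prod>j'\<in>J. if j' = j then mono_pow (x j) e else 1) * (\<Prod>j'\<in>J. mono_pow (x j') (a j'))"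
    by (simp add: mono_pow_add prod.distrib[symmetric] mult.commute if_distrib cong: if_cong)
  finally show ?thesis
    using assms by simp
qed

text \<open>The row taken by the new index \<open>z\<close> is either unused by \<open>\<phi>\<close>, or it is \<open>\<phi> j\<close> for some
  \<open>j \<in> J\<close>; in the latter case the exponents \<open>a j\<close> and \<open>a z\<close> merge.\<close>

lemma aug_monomial_insert:
  assumes "finite J" "finite B" "z \<notin> J"
  shows "aug_monomial B X (insert z J) a = aug_monomial B X J a * (\<Sum>l\<in>B. mono_pow (X $ l) (a z))
           - (\<Sum>j\<in>J. aug_monomial B X J (a(j := a j + a z)))"
proof -
  define pr where "pr \<phi> = (\<Prod>j\<in>J. mono_pow (X $ \<phi> j) (a j))" for \<phi>
  have merge: "(\<Sum>\<phi>\<in>injections J B. \<Sum>j\<in>J. mono_pow (X $ \<phi> j) (a z) * pr \<phi>)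
      = (\<Sum>j\<in>J. aug_monomial B X J (a(j := a j + a z)))"
  proof -
    have "mono_pow (X $ \<phi> j) (a z) * pr \<phi> = (\<Prod>j'\<in>J. mono_pow (X $ \<phi> j') ((a(j := a j + a z)) j'))"
      if "j \<in> J" for \<phi> j
      unfolding pr_def using assms(1) that by (rule prod_mono_pow_update[symmetric])
    then show ?thesis
      unfolding aug_monomial_def by (subst sum.swap) (auto intro!: sum.cong)
  qed
  have "aug_monomial B X (insert z J) a = (\<Sum>\<phi>\<in>injections J B. \<Sum>l\<in>B - \<phi> ` J. mono_pow (X $ l) (a z) * pr \<phi>)"
    unfolding aug_monomial_def pr_def using assms
    by (subst sum_injections_insert) (auto intro!: sum.cong prod.cong)
  also have "\<dots> = (\<Sum>\<phi>\<in>injections J B. (\<Sum>l\<in>B. mono_pow (X $ l) (a z) * pr \<phi>)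
                     - (\<Sum>j\<in>J. mono_pow (X $ \<phi> j) (a z) * pr \<phi>))"
  proof (rule sum.cong[OF refl])
    fix \<phi>
    assume "\<phi> \<in> injections J B"
    then have "\<phi> ` J \<subseteq> B" "inj_on \<phi> J"
      by (auto simp: injections_def)
    then show "(\<Sum>l\<in>B - \<phi> ` J. mono_pow (X $ l) (a z) * pr \<phi>)
        = (\<Sum>l\<in>B. mono_pow (X $ l) (a z) * pr \<phi>) - (\<Sum>j\<in>J. mono_pow (X $ \<phi> j) (a z) * pr \<phi>)"
      using assms(2) by (simp add: sum_diff sum.reindex)
  qed
  also have "\<dots> = (\<Sum>\<phi>\<in>injections J B. \<Sum>l\<in>B. mono_pow (X $ l) (a z) * pr \<phi>)
                  - (\<Sum>j\<in>J. aug_monomial B X J (a(j := a j + a z)))"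
    unfolding sum_subtractf merge ..
  also have "(\<Sum>\<phi>\<in>injections J B. \<Sum>l\<in>B. mono_pow (X $ l) (a z) * pr \<phi>)
      = aug_monomial B X J a * (\<Sum>l\<in>B. mono_pow (X $ l) (a z))"
    unfolding aug_monomial_def pr_def sum_distrib_right sum_distrib_left
    by (subst sum.swap) (simp add: mult.commute)
  finally show ?thesis .
qed


section \<open>Reduction of high-degree monomials\<close>

lemma aug_monomial_other_rows_insert:
  assumes "finite J" "z \<notin> J"
  shows "aug_monomial (UNIV - {i}) X (insert z J) a
           = aug_monomial (UNIV - {i}) X J a * (power_sum (a z) X - mono_pow (X $ i) (a z))
             - (\<Sum>j\<in>J. aug_monomial (UNIV - {i}) X J (a(j := a j + a z)))"
  using aug_monomial_insert[OF assms(1) _ assms(2), of "UNIV - {i}" X a]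
  by (simp add: power_sum_def sum_diff1)

lemma sum_fun_upd_add:
  fixes a :: "'j \<Rightarrow> 'e::comm_monoid_add"
  assumes "finite J" "j \<in> J"
  shows "sum (a(j := a j + e)) J = sum a J + e"
proof -
  have "sum (a(j := a j + e)) (J - {j}) = sum a (J - {j})"
    by (rule sum.cong) auto
  then have "sum (a(j := a j + e)) J = (a j + e) + sum a (J - {j})"
    using assms by (simp add: sum.remove)
  also have "\<dots> = sum a J + e"
    using assms by (simp add: sum.remove add_ac)
  finally show ?thesis .
qed

lemma nonzero_fun_upd_add:
  fixes a :: "'j \<Rightarrow> 'k \<Rightarrow> nat"
  assumes "\<forall>j'\<in>J. a j' \<noteq> 0" "e \<noteq> 0"
  shows "\<forall>j'\<in>J. (a(j := a j + e)) j' \<noteq> 0"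
proof
  fix j'
  assume "j' \<in> J"
  show "(a(j := a j + e)) j' \<noteq> 0"
  proof (cases "j' = j")
    case True
    have "a j + e \<noteq> 0"
      using assms(2) by (auto simp: fun_eq_iff)
    with True show ?thesis
      by (simp only: fun_upd_same not_False_eq_True)
  next
    case False
    then show ?thesis
      using assms(1) \<open>j' \<in> J\<close> by (simp only: fun_upd_other not_False_eq_True)
  qed
qed

lemma aug_monomial_leading_term_step:
  fixes i :: "'n::finite" and a :: "'j \<Rightarrow> 'k::finite \<Rightarrow> nat"
  assumes J: "finite J" "z \<notin> J" and e: "a z \<noteq> 0" "mdeg (a z) \<le> CARD('n)"
    and r: "(\<lambda>X. aug_monomial (UNIV - {i}) X J a - c * mono_pow (X $ i) (sum a J))
              \<in> row_module i (mdeg (sum a J))"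
    and rj: "\<And>j. j \<in> J \<Longrightarrow> (\<lambda>X. aug_monomial (UNIV - {i}) X J (a(j := a j + a z))
                 - c * mono_pow (X $ i) (sum a J + a z)) \<in> row_module i (mdeg (sum a J) + mdeg (a z))"
  shows "(\<lambda>X. aug_monomial (UNIV - {i}) X (insert z J) a
            + (real (card J) + 1) * c * mono_pow (X $ i) (sum a (insert z J)))
         \<in> row_module i (mdeg (sum a (insert z J)))"
proof -
  define e A where "e = a z" and "A = sum a J"
  define R where "R X = aug_monomial (UNIV - {i}) X J a - c * mono_pow (X $ i) A" for X
  define Rj where "Rj j X = aug_monomial (UNIV - {i}) X J (a(j := a j + e)) - c * mono_pow (X $ i) (A + e)"
    for j X
  have R: "R \<in> row_module i (mdeg A)"
    unfolding R_def A_def by (rule r)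
  have d: "mdeg (sum a (insert z J)) = mdeg A + mdeg e"
    using J by (simp add: e_def A_def mdeg_add)
  have "mdeg e > 0"
    using e(1) unfolding e_def by (metis mdeg_eq_0_iff neq0_conv)
  have ps_e: "(power_sum e :: real^'k^'n \<Rightarrow> real) \<in> power_sum_polys"
    using e(2) by (simp add: e_def power_sum_polys_power_sum)
  have identity: "aug_monomial (UNIV - {i}) X (insert z J) a + (real (card J) + 1) * c * mono_pow (X $ i) (sum a (insert z J))
      = c * power_sum e X * mono_pow (X $ i) A + power_sum e X * R X - mono_pow (X $ i) e * R X
        - (\<Sum>j\<in>J. Rj j X)" for X
    using J by (simp add: aug_monomial_other_rows_insert R_def Rj_def e_def A_def sum_subtractf
        mono_pow_add algebra_simps)
  have "(\<lambda>X. c * power_sum e X * mono_pow (X $ i) A + power_sum e X * R X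
      - mono_pow (X $ i) e * R X - (\<Sum>j\<in>J. Rj j X)) \<in> row_module i (mdeg A + mdeg e)"
  proof (intro row_module_diff row_module_add)
    show "(\<lambda>X. c * power_sum e X * mono_pow (X $ i) A) \<in> row_module i (mdeg A + mdeg e)"
      using \<open>mdeg e > 0\<close> by (intro row_module_scale power_sum_polys_mult power_sum_polys_const ps_e
          row_module_monomial) simp
    show "(\<lambda>X. power_sum e X * R X) \<in> row_module i (mdeg A + mdeg e)"
      by (rule row_module_scale[OF ps_e row_module_mono[OF R]]) simp
    show "(\<lambda>X. mono_pow (X $ i) e * R X) \<in> row_module i (mdeg A + mdeg e)"
      by (rule row_module_shift[OF R])
    show "(\<lambda>X. \<Sum>j\<in>J. Rj j X) \<in> row_module i (mdeg A + mdeg e)"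
      using J(1) by (rule row_module_sum) (unfold Rj_def A_def e_def, rule rj)
  qed
  then show ?thesis
    unfolding d by (rule row_module_cong) (simp only: identity)
qed

lemma aug_monomial_leading_term:
  fixes i :: "'n::finite" and a :: "'j \<Rightarrow> 'k::finite \<Rightarrow> nat"
  assumes "finite J" "\<forall>j\<in>J. a j \<noteq> 0" "mdeg (sum a J) \<le> CARD('n)"
  shows "(\<lambda>X. aug_monomial (UNIV - {i}) X J a - (-1) ^ card J * fact (card J) * mono_pow (X $ i) (sum a J))
           \<in> row_module i (mdeg (sum a J))"
  using assms
proof (induction J arbitrary: a rule: finite_induct)
  case empty
  show ?case
    using row_module_zero[of i 0] by (simp add: mono_pow_def mdeg_def)
next
  case (insert z J)
  define c :: real where "c = (-1) ^ card J * fact (card J)"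
  have "mdeg (sum a (insert z J)) = mdeg (sum a J) + mdeg (a z)"
    unfolding sum.insert[OF insert.hyps(1,2)] mdeg_add by (rule add.commute)
  then have deg: "mdeg (sum a J) + mdeg (a z) \<le> CARD('n)"
    using insert.prems(2) by linarith
  have "(\<lambda>X. aug_monomial (UNIV - {i}) X (insert z J) a + (real (card J) + 1) * c * mono_pow (X $ i) (sum a (insert z J)))
      \<in> row_module i (mdeg (sum a (insert z J)))"
  proof (rule aug_monomial_leading_term_step)
    show "(\<lambda>X. aug_monomial (UNIV - {i}) X J a - c * mono_pow (X $ i) (sum a J)) \<in> row_module i (mdeg (sum a J))"
      using insert deg unfolding c_def by simp
  next
    fix j
    assume "j \<in> J"
    have nonzero: "\<forall>j'\<in>J. (a(j := a j + a z)) j' \<noteq> 0"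
      using insert.prems(1) by (intro nonzero_fun_upd_add) blast+
    have sum_eq: "sum (a(j := a j + a z)) J = sum a J + a z"
      using insert.hyps(1) \<open>j \<in> J\<close> by (rule sum_fun_upd_add)
    have "mdeg (sum (a(j := a j + a z)) J) \<le> CARD('n)"
      using deg unfolding sum_eq mdeg_add .
    with nonzero have "(\<lambda>X. aug_monomial (UNIV - {i}) X J (a(j := a j + a z))
        - (-1) ^ card J * fact (card J) * mono_pow (X $ i) (sum (a(j := a j + a z)) J))
        \<in> row_module i (mdeg (sum (a(j := a j + a z)) J))"
      by (rule insert.IH)
    then show "(\<lambda>X. aug_monomial (UNIV - {i}) X J (a(j := a j + a z)) - c * mono_pow (X $ i) (sum a J + a z))
        \<in> row_module i (mdeg (sum a J) + mdeg (a z))"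
      unfolding sum_eq mdeg_add c_def .
  qed (use insert deg in auto)
  moreover have "(real (card J) + 1) * c = - ((-1) ^ card (insert z J) * fact (card (insert z J)))"
    using insert.hyps by (simp add: c_def algebra_simps)
  ultimately show ?case
    by simp
qed

lemma monomial_top_degree_in_row_module:
  fixes \<delta> :: "'k::finite \<Rightarrow> nat"
  assumes "mdeg \<delta> = CARD('n)"
  shows "(\<lambda>X :: real^'k^'n::finite. mono_pow (X $ i) \<delta>) \<in> row_module i CARD('n)"
proof -
  obtain a :: "'n \<Rightarrow> 'k \<Rightarrow> nat" where a: "\<forall>j. mdeg (a j) = 1" "sum a UNIV = \<delta>"
    using multi_index_unit_decomposition[of "UNIV :: 'n set" \<delta>] assms by auto
  define c :: real where "c = (-1) ^ CARD('n) * fact CARD('n)"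
  have "\<forall>j\<in>UNIV. a j \<noteq> 0"
    using a(1) by (metis mdeg_zero zero_neq_one)
  then have "(\<lambda>X :: real^'k^'n. aug_monomial (UNIV - {i}) X UNIV a
      - (-1) ^ CARD('n) * fact CARD('n) * mono_pow (X $ i) (sum a UNIV)) \<in> row_module i (mdeg (sum a UNIV))"
    using a(2) assms by (intro aug_monomial_leading_term) simp_all
  then have leading: "(\<lambda>X :: real^'k^'n. aug_monomial (UNIV - {i}) X UNIV a - c * mono_pow (X $ i) \<delta>)
      \<in> row_module i CARD('n)"
    unfolding a(2) assms c_def .
  have vanish: "aug_monomial (UNIV - {i}) X UNIV a = 0" for X :: "real^'k^'n"
    by (rule aug_monomial_eq_0) (simp_all add: card_Diff_singleton)
  have "c \<noteq> 0"
    by (simp add: c_def)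
  from row_module_cmult[OF leading, of "-1 / c"] show ?thesis
    by (rule row_module_cong) (simp add: vanish \<open>c \<noteq> 0\<close>)
qed

lemma monomial_in_row_module:
  "(\<lambda>X :: real^'k::finite^'n::finite. mono_pow (X $ i) \<gamma>) \<in> row_module i (Suc CARD('n))"
proof (induction "mdeg \<gamma>" arbitrary: \<gamma> rule: less_induct)
  case less
  show ?case
  proof (cases "mdeg \<gamma> \<le> CARD('n)")
    case True
    then show ?thesis by (intro row_module_monomial) simp
  next
    case False
    then have "mdeg \<gamma> > 0"
      by linarith
    then obtain c \<gamma>' where \<gamma>: "\<gamma> = \<gamma>' + unit_index c" "mdeg \<gamma>' = mdeg \<gamma> - 1"
      by (rule mdeg_split_unit)
    have split: "mono_pow (X $ i) \<gamma> = mono_pow (X $ i) (unit_index c) * mono_pow (X $ i) \<gamma>'" for X :: "real^'k^'n"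
      by (simp add: \<gamma>(1) mono_pow_add mult.commute)
    show ?thesis
    proof (cases "mdeg \<gamma>' = CARD('n)")
      case True
      from row_module_shift[OF monomial_top_degree_in_row_module[OF True], of i "unit_index c"]
      show ?thesis
        by (simp add: split)
    next
      case False
      then have less_\<gamma>: "mdeg \<gamma>' < mdeg \<gamma>" and "CARD('n) < mdeg \<gamma>'"
        using \<gamma>(2) \<open>\<not> mdeg \<gamma> \<le> CARD('n)\<close> by auto
      obtain q where q: "\<And>\<alpha>. q \<alpha> \<in> power_sum_polys"
        "\<And>X. mono_pow (X $ i) \<gamma>' = (\<Sum>\<alpha>\<in>{\<alpha>. mdeg \<alpha> < Suc CARD('n)}. mono_pow (X $ i) \<alpha> * q \<alpha> X)"
        using less[OF less_\<gamma>] by (elim row_moduleE) blast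
      have "(\<lambda>X. \<Sum>\<alpha>\<in>{\<alpha>. mdeg \<alpha> < Suc CARD('n)}. q \<alpha> X * mono_pow (X $ i) (\<alpha> + unit_index c))
          \<in> row_module i (Suc CARD('n))"
        using \<open>CARD('n) < mdeg \<gamma>'\<close> \<gamma>(2)
        by (intro row_module_sum finite_mdeg_less row_module_scale q(1) less) (simp add: mdeg_add)
      then show ?thesis
        by (rule row_module_cong) (simp add: split q(2) sum_distrib_left mono_pow_add mult_ac)
    qed
  qed
qed

lemma row_module_mult:
  fixes f g :: "real^'k::finite^'n::finite \<Rightarrow> real"
  assumes "f \<in> row_module i (Suc CARD('n))" "g \<in> row_module i (Suc CARD('n))"
  shows "(\<lambda>X. f X * g X) \<in> row_module i (Suc CARD('n))"
proof -
  obtain q1 where q1: "\<And>\<alpha>. q1 \<alpha> \<in> power_sum_polys"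
    "\<And>X. f X = (\<Sum>\<alpha>\<in>{\<alpha>. mdeg \<alpha> < Suc CARD('n)}. mono_pow (X $ i) \<alpha> * q1 \<alpha> X)"
    using assms(1) by (elim row_moduleE) blast
  obtain q2 where q2: "\<And>\<alpha>. q2 \<alpha> \<in> power_sum_polys"
    "\<And>X. g X = (\<Sum>\<alpha>\<in>{\<alpha>. mdeg \<alpha> < Suc CARD('n)}. mono_pow (X $ i) \<alpha> * q2 \<alpha> X)"
    using assms(2) by (elim row_moduleE) blast
  have "(\<lambda>X. \<Sum>\<alpha>\<in>{\<alpha>. mdeg \<alpha> < Suc CARD('n)}. \<Sum>\<beta>\<in>{\<alpha>. mdeg \<alpha> < Suc CARD('n)}.
      (q1 \<alpha> X * q2 \<beta> X) * mono_pow (X $ i) (\<alpha> + \<beta>)) \<in> row_module i (Suc CARD('n))"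
    by (intro row_module_sum finite_mdeg_less row_module_scale power_sum_polys_mult q1(1) q2(1)
        monomial_in_row_module)
  then show ?thesis
    by (rule row_module_cong) (simp add: q1(2) q2(2) sum_product mono_pow_add mult_ac)
qed

lemma row_expansion_transfer:
  fixes F :: "real^'k::finite^'n::finite \<Rightarrow> 'n \<Rightarrow> real"
  assumes expansion: "\<And>X. F X i = (\<Sum>\<alpha>\<in>{\<alpha>. mdeg \<alpha> < d}. mono_pow (X $ i) \<alpha> * q \<alpha> X)"
    and q: "\<And>\<alpha>. q \<alpha> \<in> power_sum_polys"
    and equivariant: "\<And>\<sigma> X. \<sigma> permutes UNIV \<Longrightarrow> F (perm_rows \<sigma> X) i = F X (inv \<sigma> i)"
  shows "F X l = (\<Sum>\<alpha>\<in>{\<alpha>. mdeg \<alpha> < d}. mono_pow (X $ l) \<alpha> * q \<alpha> X)"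
proof -
  define \<tau> where "\<tau> = Transposition.transpose i l"
  have \<tau>: "\<tau> permutes UNIV"
    unfolding \<tau>_def by (rule permutes_swap_id) auto
  have "inv \<tau> i = l"
    unfolding permutes_inv_eq[OF \<tau>] by (simp add: \<tau>_def)
  then have "F X l = F (perm_rows \<tau> X) i"
    using equivariant[OF \<tau>] by simp
  also have "\<dots> = (\<Sum>\<alpha>\<in>{\<alpha>. mdeg \<alpha> < d}. mono_pow (perm_rows \<tau> X $ i) \<alpha> * q \<alpha> (perm_rows \<tau> X))"
    by (rule expansion)
  also have "\<dots> = (\<Sum>\<alpha>\<in>{\<alpha>. mdeg \<alpha> < d}. mono_pow (X $ l) \<alpha> * q \<alpha> X)"
    using \<open>inv \<tau> i = l\<close> by (simp add: perm_rows_nth power_sum_polys_perm_rows[OF q \<tau>])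
  finally show ?thesis .
qed

lemma power_sum_in_power_sum_polys:
  "(power_sum \<gamma> :: real^'k::finite^'n::finite \<Rightarrow> real) \<in> power_sum_polys"
proof -
  fix i0 :: 'n
  obtain q where q: "\<And>\<alpha>. q \<alpha> \<in> power_sum_polys"
    "\<And>X :: real^'k^'n. mono_pow (X $ i0) \<gamma> = (\<Sum>\<alpha>\<in>{\<alpha>. mdeg \<alpha> < Suc CARD('n)}. mono_pow (X $ i0) \<alpha> * q \<alpha> X)"
    using monomial_in_row_module[of i0 \<gamma>] by (elim row_moduleE) blast
  have rows: "mono_pow (X $ i) \<gamma> = (\<Sum>\<alpha>\<in>{\<alpha>. mdeg \<alpha> < Suc CARD('n)}. mono_pow (X $ i) \<alpha> * q \<alpha> X)"
    for X :: "real^'k^'n" and i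
    by (rule row_expansion_transfer[where F="\<lambda>X i. mono_pow (X $ i) \<gamma>" and i=i0]) (use q in \<open>simp_all add: perm_rows_nth\<close>)
  have "(\<lambda>X. \<Sum>\<alpha>\<in>{\<alpha>. mdeg \<alpha> < Suc CARD('n)}. power_sum \<alpha> X * q \<alpha> X) \<in> power_sum_polys"
    by (intro power_sum_polys_sum finite_mdeg_less power_sum_polys_mult q(1) power_sum_polys_power_sum) simp
  moreover have "(\<Sum>\<alpha>\<in>{\<alpha>. mdeg \<alpha> < Suc CARD('n)}. power_sum \<alpha> X * q \<alpha> X) = power_sum \<gamma> X" for X
    unfolding power_sum_def sum_distrib_right by (subst sum.swap) (simp add: rows)
  ultimately show ?thesis
    by simp
qed

lemma aug_monomial_in_row_module:
  fixes i :: "'n::finite" and a :: "'j \<Rightarrow> 'k::finite \<Rightarrow> nat"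
  assumes "finite J"
  shows "(\<lambda>X :: real^'k^'n. aug_monomial (UNIV - {i}) X J a) \<in> row_module i (Suc CARD('n))"
  using assms
proof (induction J arbitrary: a rule: finite_induct)
  case empty
  show ?case
    by (rule row_module_cong[OF row_module_power_sum_polys[OF power_sum_polys_const zero_less_Suc]]) simp
next
  case (insert z J)
  have "(\<lambda>X :: real^'k^'n. aug_monomial (UNIV - {i}) X J a * (power_sum (a z) X - mono_pow (X $ i) (a z))
           - (\<Sum>j\<in>J. aug_monomial (UNIV - {i}) X J (a(j := a j + a z)))) \<in> row_module i (Suc CARD('n))"
    by (intro row_module_diff row_module_mult row_module_sum insert.IH insert.hyps(1)
        row_module_power_sum_polys power_sum_in_power_sum_polys monomial_in_row_module) simp
  then show ?case
    by (rule row_module_cong) (simp add: aug_monomial_other_rows_insert[OF insert.hyps])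
qed


section \<open>Polynomials invariant under the stabiliser of a row\<close>

lemma sum_permutes_eq_sum_injections:
  assumes "finite B"
  shows "(\<Sum>\<sigma>\<in>{\<sigma>. \<sigma> permutes B}. \<Prod>b\<in>B. G (\<sigma> b) b) = (\<Sum>\<phi>\<in>injections B B. \<Prod>b\<in>B. G (\<phi> b) b)"
proof (rule sum.reindex_bij_witness[where j="\<lambda>\<sigma>. restrict \<sigma> B" and i="\<lambda>\<phi> x. if x \<in> B then \<phi> x else x"])
  fix \<sigma>
  assume "\<sigma> \<in> {\<sigma>. \<sigma> permutes B}"
  then have \<sigma>: "\<sigma> permutes B"
    by simp
  show "(\<lambda>x. if x \<in> B then restrict \<sigma> B x else x) = \<sigma>"
    using permutes_not_in[OF \<sigma>] by auto
  show "restrict \<sigma> B \<in> injections B B"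
    using permutes_in_image[OF \<sigma>] permutes_inj_on[OF \<sigma>] by (auto simp: injections_def inj_on_def)
  show "(\<Prod>b\<in>B. G (restrict \<sigma> B b) b) = (\<Prod>b\<in>B. G (\<sigma> b) b)"
    by simp
next
  fix \<phi>
  assume "\<phi> \<in> injections B B"
  then have \<phi>: "\<phi> \<in> B \<rightarrow>\<^sub>E B" "inj_on \<phi> B"
    by (auto simp: injections_def)
  show "restrict (\<lambda>x. if x \<in> B then \<phi> x else x) B = \<phi>"
    using \<phi>(1) by (auto simp: fun_eq_iff PiE_def extensional_def)
  have "\<phi> ` B = B"
    using endo_inj_surj[OF assms _ \<phi>(2)] \<phi>(1) by auto
  then have "bij_betw (\<lambda>x. if x \<in> B then \<phi> x else x) B B"
    using \<phi>(2) by (simp add: bij_betw_def inj_on_def image_def)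
  then show "(\<lambda>x. if x \<in> B then \<phi> x else x) \<in> {\<sigma>. \<sigma> permutes B}"
    by (auto intro: bij_imp_permutes)
qed

lemma stabilizer_sum_monomial:
  fixes m :: "'n::finite \<Rightarrow> 'k::finite \<Rightarrow> nat"
  shows "(\<Sum>\<sigma>\<in>{\<sigma>. \<sigma> permutes (UNIV - {i})}. \<Prod>l\<in>UNIV. mono_pow (X $ inv \<sigma> l) (m l))
           = mono_pow (X $ i) (m i) * aug_monomial (UNIV - {i}) X (UNIV - {i}) m"
proof -
  have "(\<Prod>l\<in>UNIV. mono_pow (X $ inv \<sigma> l) (m l))
      = mono_pow (X $ i) (m i) * (\<Prod>l\<in>UNIV - {i}. mono_pow (X $ inv \<sigma> l) (m l))"
    if "\<sigma> permutes (UNIV - {i})" for \<sigma>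
  proof -
    have "inv \<sigma> i = i"
      using permutes_not_in[OF that] by (simp add: permutes_inv_eq[OF that])
    then show ?thesis
      by (simp add: prod.remove[of UNIV i])
  qed
  then have "(\<Sum>\<sigma>\<in>{\<sigma>. \<sigma> permutes (UNIV - {i})}. \<Prod>l\<in>UNIV. mono_pow (X $ inv \<sigma> l) (m l))
      = mono_pow (X $ i) (m i) * (\<Sum>\<sigma>\<in>{\<sigma>. \<sigma> permutes (UNIV - {i})}. \<Prod>l\<in>UNIV - {i}. mono_pow (X $ inv \<sigma> l) (m l))"
    by (simp add: sum_distrib_left)
  also have "(\<Sum>\<sigma>\<in>{\<sigma>. \<sigma> permutes (UNIV - {i})}. \<Prod>l\<in>UNIV - {i}. mono_pow (X $ inv \<sigma> l) (m l))
      = (\<Sum>\<sigma>\<in>{\<sigma>. \<sigma> permutes (UNIV - {i})}. \<Prod>l\<in>UNIV - {i}. mono_pow (X $ \<sigma> l) (m l))"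
    by (rule sum_permutations_inverse[symmetric])
  also have "\<dots> = aug_monomial (UNIV - {i}) X (UNIV - {i}) m"
    unfolding aug_monomial_def by (rule sum_permutes_eq_sum_injections) simp
  finally show ?thesis .
qed

lemma stabilizer_invariant_in_row_module:
  fixes f :: "real^'k::finite^'n::finite \<Rightarrow> real"
  assumes poly: "poly_fun UNIV (\<lambda>y. f (\<chi> l r. y (l, r)))"
    and invariant: "\<And>\<sigma> X. \<sigma> permutes (UNIV - {i}) \<Longrightarrow> f (perm_rows \<sigma> X) = f X"
  shows "f \<in> row_module i (Suc CARD('n))"
proof -
  obtain M c where M: "finite M" "\<And>X. f X = (\<Sum>m\<in>M. c m * (\<Prod>l\<in>UNIV. mono_pow (X $ l) (curry m l)))"
    using poly by (rule poly_fun_matrix_expansion) blast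
  define S where "S = {\<sigma>. \<sigma> permutes (UNIV - {i :: 'n})}"
  have "finite S"
    unfolding S_def by (rule finite_permutations) simp
  moreover have "id \<in> S"
    by (simp add: S_def)
  ultimately have "card S > 0" "S \<noteq> {}"
    by (auto simp: card_gt_0_iff)
  have "(\<Sum>\<sigma>\<in>S. f (perm_rows \<sigma> X)) = (\<Sum>\<sigma>\<in>S. f X)" for X
    by (rule sum.cong) (simp_all add: S_def invariant)
  then have "f X = (1 / card S) * (\<Sum>\<sigma>\<in>S. f (perm_rows \<sigma> X))" for X
    using \<open>card S > 0\<close> \<open>S \<noteq> {}\<close> by simp
  also have "(\<Sum>\<sigma>\<in>S. f (perm_rows \<sigma> X))
      = (\<Sum>m\<in>M. c m * (mono_pow (X $ i) (curry m i) * aug_monomial (UNIV - {i}) X (UNIV - {i}) (curry m)))" for X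
    unfolding M(2) perm_rows_nth S_def
    by (subst sum.swap) (simp add: sum_distrib_left[symmetric] stabilizer_sum_monomial)
  finally have "f X = (1 / card S) * (\<Sum>m\<in>M. c m * (mono_pow (X $ i) (curry m i)
      * aug_monomial (UNIV - {i}) X (UNIV - {i}) (curry m)))" for X .
  moreover have "(\<lambda>X. (1 / card S) * (\<Sum>m\<in>M. c m * (mono_pow (X $ i) (curry m i)
      * aug_monomial (UNIV - {i}) X (UNIV - {i}) (curry m)))) \<in> row_module i (Suc CARD('n))"
    by (intro row_module_cmult row_module_sum M(1) row_module_mult monomial_in_row_module
        aug_monomial_in_row_module) simp
  ultimately show ?thesis
    by (simp add: row_module_cong)
qed


lemma perm_equivariant_entry_in_row_module:
  fixes P :: "real^'k::finite^'n::finite \<Rightarrow> real^'l::finite^'n"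
  assumes "poly_map P" "perm_equivariant P"
  shows "(\<lambda>X. P X $ i $ j) \<in> row_module i (Suc CARD('n))"
proof (rule stabilizer_invariant_in_row_module)
  show "poly_fun UNIV (\<lambda>y. P (\<chi> l r. y (l, r)) $ i $ j)"
    using assms(1) by (simp add: poly_map_def)
  fix \<sigma> X
  assume \<sigma>: "\<sigma> permutes (UNIV - {i})"
  then have "inv \<sigma> i = i"
    using permutes_not_in[OF \<sigma>] by (simp add: permutes_inv_eq[OF \<sigma>])
  then show "P (perm_rows \<sigma> X) $ i $ j = P X $ i $ j"
    using assms(2) permutes_subset[OF \<sigma>] by (simp add: perm_equivariant_def perm_rows_nth)
qed

lemma perm_equivariant_imp_power_sum_form:
  fixes P :: "real^'k::finite^'n::finite \<Rightarrow> real^'l::finite^'n"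
  assumes "poly_map P" "perm_equivariant P"
  shows "power_sum_form P"
proof -
  fix i0 :: 'n
  have equivariant: "P (perm_rows \<sigma> X) $ i0 $ j = P X $ inv \<sigma> i0 $ j" if "\<sigma> permutes UNIV" for \<sigma> X j
    using assms(2) that by (simp add: perm_equivariant_def perm_rows_nth)
  have "\<forall>j. \<exists>q. (\<forall>\<alpha>. q \<alpha> \<in> power_sum_polys) \<and>
      (\<forall>X. P X $ i0 $ j = (\<Sum>\<alpha>\<in>{\<alpha>. mdeg \<alpha> < Suc CARD('n)}. mono_pow (X $ i0) \<alpha> * q \<alpha> X))"
    using perm_equivariant_entry_in_row_module[OF assms, of i0] unfolding row_module_def by blast
  then obtain q where q: "\<forall>j. (\<forall>\<alpha>. q j \<alpha> \<in> power_sum_polys) \<and>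
      (\<forall>X. P X $ i0 $ j = (\<Sum>\<alpha>\<in>{\<alpha>. mdeg \<alpha> < Suc CARD('n)}. mono_pow (X $ i0) \<alpha> * q j \<alpha> X))"
    by metis
  then have "\<forall>\<alpha> j. \<exists>Q. poly_fun (multi_indices CARD('n)) Q \<and> (\<forall>X. q j \<alpha> X = Q (\<lambda>\<beta>. power_sum \<beta> X))"
    unfolding power_sum_polys_def by blast
  then obtain Q where Q: "\<forall>\<alpha> j. poly_fun (multi_indices CARD('n)) (Q \<alpha> j) \<and>
      (\<forall>X. q j \<alpha> X = Q \<alpha> j (\<lambda>\<beta>. power_sum \<beta> X))"
    by metis
  have rows: "P X $ i $ j = (\<Sum>\<alpha>\<in>{\<alpha>. mdeg \<alpha> < Suc CARD('n)}. mono_pow (X $ i) \<alpha> * q j \<alpha> X)" for X i j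
    by (rule row_expansion_transfer[where F="\<lambda>X i. P X $ i $ j" and i=i0]) (use q equivariant in simp_all)
  show ?thesis
    unfolding power_sum_form_def
    by (intro exI[of _ Q] conjI allI) (use Q in \<open>simp_all add: vec_eq_iff rows multi_indices_eq\<close>)
qed

lemma power_sum_form_imp_perm_equivariant:
  fixes P :: "real^'k::finite^'n::finite \<Rightarrow> real^'l::finite^'n"
  assumes "power_sum_form P"
  shows "perm_equivariant P"
proof -
  obtain q :: "('k \<Rightarrow> nat) \<Rightarrow> 'l \<Rightarrow> (('k \<Rightarrow> nat) \<Rightarrow> real) \<Rightarrow> real" where
    q: "\<And>X. P X = (\<chi> i j. \<Sum>\<alpha>\<in>multi_indices CARD('n). mono_pow (X $ i) \<alpha> * q \<alpha> j (\<lambda>\<beta>. power_sum \<beta> X))"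
    using assms unfolding power_sum_form_def by blast
  show ?thesis
    unfolding perm_equivariant_def
    by (auto simp: q vec_eq_iff perm_rows_nth power_sum_perm_rows)
qed

theorem theorem2:
  fixes P :: "real^'k^'n \<Rightarrow> real^'l^'n"
  shows "(poly_map P \<and> perm_equivariant P \<longrightarrow> power_sum_form P) \<and>
         (power_sum_form P \<longrightarrow> perm_equivariant P)"
  using perm_equivariant_imp_power_sum_form power_sum_form_imp_perm_equivariant by blast

end
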